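(* Let $L\in R[x][\partial]$ have positive order $r$ and let $k\ge r$. Then $R[x][\partial]\cdot M_k(L)=R[x][\partial]\cdot M_{k+1}(L)$ if and only if $\sigma(I_k)=I_{k+1}$.
   Context: $R$ is a principal ideal domain with quotient field $Q_R$; $\sigma$ is an $R$-automorphism of $R[x]$ with $\sigma(x)=\gamma x+\tau$ ($\gamma,\tau\in R$, $\gamma$ a unit), $\delta$ an $R$-linear $\sigma$-derivation with $\deg\delta(x)\le 1$; $R[x][\partial]$ is the Ore algebra with $\partial p=\sigma(p)\partial+\delta(p)$, inside $Q_R(x)[\partial]$. $\mathrm{cont}(L)=Q_R(x)[\partial]L\cap R[x][\partial]$; $M_k(L)=\{P\in\mathrm{cont}(L):\deg_\partial P\le k\}$; $I_k=\{[\partial^k]P:P\in M_k(L)\}\cup\{0\}$, an ideal of $R[x]$, where $[\partial^k]P$ is the coefficient of $\partial^k$ in $P$. $R[x][\partial]\cdot S$ denotes the left ideal generated by $S$, and $\sigma(I_k)=\{\sigma(f):f\in I_k\}$. *)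

theory Defs
  imports "HOL-Computational_Algebra.Polynomial" "HOL-Computational_Algebra.Fraction_Field"
begin

definition is_ring_ideal :: "'a::comm_ring_1 set \<Rightarrow> bool" where
  "is_ring_ideal I \<longleftrightarrow> 0 \<in> I \<and> (\<forall>a\<in>I. \<forall>b\<in>I. a + b \<in> I) \<and> (\<forall>r. \<forall>a\<in>I. r * a \<in> I)"

definition is_pid :: "'a::idom itself \<Rightarrow> bool" where
  "is_pid _ \<longleftrightarrow> (\<forall>I::'a set. is_ring_ideal I \<longrightarrow> (\<exists>g. I = {r * g | r. True}))"

text \<open>An Ore polynomial \<open>\<Sum> c_i \<partial>^i\<close> over a commutative coefficient ring is represented by
  the polynomial whose \<open>i\<close>-th coefficient is \<open>c_i\<close> (coefficients written on the left).
  Multiplication is governed by \<open>\<partial> c = \<sigma>(c) \<partial> + \<delta>(c)\<close>.\<close>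

definition ore_D :: "('k::comm_ring_1 \<Rightarrow> 'k) \<Rightarrow> ('k \<Rightarrow> 'k) \<Rightarrow> 'k poly \<Rightarrow> 'k poly" where
  "ore_D \<sigma> \<delta> P = pCons 0 (map_poly \<sigma> P) + map_poly \<delta> P"
  \<comment> \<open>left multiplication by \<open>\<partial>\<close>\<close>

definition ore_mult :: "('k::comm_ring_1 \<Rightarrow> 'k) \<Rightarrow> ('k \<Rightarrow> 'k) \<Rightarrow> 'k poly \<Rightarrow> 'k poly \<Rightarrow> 'k poly" where
  "ore_mult \<sigma> \<delta> A B = (\<Sum>i\<le>degree A. smult (coeff A i) ((ore_D \<sigma> \<delta> ^^ i) B))"

definition ore_left_ideal :: "('k::comm_ring_1 \<Rightarrow> 'k) \<Rightarrow> ('k \<Rightarrow> 'k) \<Rightarrow> 'k poly set \<Rightarrow> 'k poly set" where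
  "ore_left_ideal \<sigma> \<delta> S =
     {P. \<exists>xs. set (map snd xs) \<subseteq> S \<and> P = sum_list (map (\<lambda>(A, s). ore_mult \<sigma> \<delta> A s) xs)}"

definition sig :: "'a::idom \<Rightarrow> 'a \<Rightarrow> 'a poly \<Rightarrow> 'a poly" where
  "sig \<gamma> \<tau> p = pcompose p [:\<tau>, \<gamma>:]"

text \<open>Extension of \<open>\<sigma>\<close> and \<open>\<delta>\<close> to the quotient field \<open>Q_R(x) = Frac(R[x])\<close>:
  \<open>\<sigma>(p/q) = \<sigma>(p)/\<sigma>(q)\<close> and \<open>\<delta>(p/q) = (\<delta>(p)\<sigma>(q) - \<sigma>(p)\<delta>(q)) / (\<sigma>(q) q)\<close>
  (the unique extension of a \<open>\<sigma>\<close>-derivation with \<open>\<delta>(ab) = \<sigma>(a)\<delta>(b) + \<delta>(a)b\<close>).\<close>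
definition frac_rep :: "'b::idom fract \<Rightarrow> 'b \<times> 'b" where
  "frac_rep f = (SOME (p, q). q \<noteq> 0 \<and> f = Fract p q)"

definition sig_ext :: "('b::idom \<Rightarrow> 'b) \<Rightarrow> 'b fract \<Rightarrow> 'b fract" where
  "sig_ext s f = (case frac_rep f of (p, q) \<Rightarrow> Fract (s p) (s q))"

definition del_ext :: "('b::idom \<Rightarrow> 'b) \<Rightarrow> ('b \<Rightarrow> 'b) \<Rightarrow> 'b fract \<Rightarrow> 'b fract" where
  "del_ext s d f = (case frac_rep f of (p, q) \<Rightarrow> Fract (d p * s q - s p * d q) (s q * q))"

definition ore_embed :: "'b::idom poly \<Rightarrow> 'b fract poly" where
  "ore_embed P = map_poly (\<lambda>c. Fract c 1) P"

text \<open>\<open>cont(L) = Q_R(x)[\<partial>] L \<inter> R[x][\<partial>]\<close>.\<close>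
definition cont :: "'a::idom \<Rightarrow> 'a \<Rightarrow> ('a poly \<Rightarrow> 'a poly) \<Rightarrow> 'a poly poly \<Rightarrow> 'a poly poly set" where
  "cont \<gamma> \<tau> \<delta> L = {P. \<exists>A. ore_embed P =
      ore_mult (sig_ext (sig \<gamma> \<tau>)) (del_ext (sig \<gamma> \<tau>) \<delta>) A (ore_embed L)}"

definition Mk :: "'a::idom \<Rightarrow> 'a \<Rightarrow> ('a poly \<Rightarrow> 'a poly) \<Rightarrow> 'a poly poly \<Rightarrow> nat \<Rightarrow> 'a poly poly set" where
  "Mk \<gamma> \<tau> \<delta> L k = {P \<in> cont \<gamma> \<tau> \<delta> L. degree P \<le> k}"

definition Ik :: "'a::idom \<Rightarrow> 'a \<Rightarrow> ('a poly \<Rightarrow> 'a poly) \<Rightarrow> 'a poly poly \<Rightarrow> nat \<Rightarrow> 'a poly set" where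
  "Ik \<gamma> \<tau> \<delta> L k = {coeff P k | P. P \<in> Mk \<gamma> \<tau> \<delta> L k} \<union> {0}"

end

theory Submission
  imports Defs
begin

(* Let K = cont(L); it is closed under addition, scalar multiples and left
   multiplication by \<partial>, and M_k is its part of degree at most k.  Since \<sigma> is
   surjective, a coefficient can be moved to the right of \<partial> at the cost of lower
   order terms, c \<partial> Y = \<partial> (\<sigma>^-1(c) Y) - \<delta>(\<sigma>^-1(c)) Y, so every element of the
   left ideal generated by M_k has the form P + \<partial> X with P \<in> M_k and X \<in> K.  As \<sigma>
   is injective, \<partial> raises the degree of every nonzero X by exactly one, so if such
   an element has degree at most k + 1, then X \<in> M_k and its coefficient of
   \<partial>^(k+1) is \<sigma> of the leading coefficient of X.  Conversely, if
   \<sigma>(I_k) = I_(k+1), then every element of M_(k+1) is P + \<partial> X with P, X \<in> M_k. *)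

lemma frac_rep_correct: "snd (frac_rep f) \<noteq> 0 \<and> f = Fract (fst (frac_rep f)) (snd (frac_rep f))"
proof -
  obtain a b where "f = Fract a b" "b \<noteq> 0" by (cases f)
  hence "\<exists>x. case x of (p, q) \<Rightarrow> q \<noteq> 0 \<and> f = Fract p q" by auto
  from someI_ex[OF this] show ?thesis unfolding frac_rep_def by (auto split: prod.splits)
qed

lemma ore_left_ideal_mult_mem: "x \<in> S \<Longrightarrow> ore_mult s d A x \<in> ore_left_ideal s d S"
  unfolding ore_left_ideal_def by (intro CollectI exI[of _ "[(A, x)]"]) simp

lemma ore_left_ideal_zero_mem: "0 \<in> ore_left_ideal s d S"
  unfolding ore_left_ideal_def by (intro CollectI exI[of _ "[]"]) simp

lemma ore_left_ideal_add_mem: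
  assumes "P \<in> ore_left_ideal s d S" "Q \<in> ore_left_ideal s d S"
  shows "P + Q \<in> ore_left_ideal s d S"
proof -
  from assms obtain xs ys where
    "set (map snd xs) \<subseteq> S" "P = sum_list (map (\<lambda>(A, x). ore_mult s d A x) xs)"
    "set (map snd ys) \<subseteq> S" "Q = sum_list (map (\<lambda>(A, x). ore_mult s d A x) ys)"
    unfolding ore_left_ideal_def by blast
  thus ?thesis unfolding ore_left_ideal_def by (intro CollectI exI[of _ "xs @ ys"]) simp
qed

lemma ore_left_ideal_least:
  assumes "0 \<in> T" and "\<And>P Q. P \<in> T \<Longrightarrow> Q \<in> T \<Longrightarrow> P + Q \<in> T"
    and "\<And>A x. x \<in> S \<Longrightarrow> ore_mult s d A x \<in> T"
  shows "ore_left_ideal s d S \<subseteq> T"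
proof
  fix P assume "P \<in> ore_left_ideal s d S"
  then obtain xs where xs: "set (map snd xs) \<subseteq> S"
    and P: "P = sum_list (map (\<lambda>(A, x). ore_mult s d A x) xs)"
    unfolding ore_left_ideal_def by blast
  from xs have "sum_list (map (\<lambda>(A, x). ore_mult s d A x) xs) \<in> T"
    by (induction xs) (auto simp: assms(1) intro!: assms(2,3))
  thus "P \<in> T" using P by simp
qed

lemma ore_left_ideal_subset:
  "(\<And>A x. x \<in> S' \<Longrightarrow> ore_mult s d A x \<in> ore_left_ideal s d S) \<Longrightarrow>
    ore_left_ideal s d S' \<subseteq> ore_left_ideal s d S"
  by (rule ore_left_ideal_least) (simp_all add: ore_left_ideal_zero_mem ore_left_ideal_add_mem)

lemma ore_left_ideal_mono: "S' \<subseteq> S \<Longrightarrow> ore_left_ideal s d S' \<subseteq> ore_left_ideal s d S"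
  by (rule ore_left_ideal_subset) (auto intro: ore_left_ideal_mult_mem)

locale sigma_derivation =
  fixes s d :: "'k::comm_ring_1 \<Rightarrow> 'k"
  assumes sigma_add: "s (x + y) = s x + s y"
    and sigma_mult: "s (x * y) = s x * s y"
    and delta_add: "d (x + y) = d x + d y"
    and delta_mult: "d (x * y) = s x * d y + d x * y"
begin

lemma sigma_zero: "s 0 = 0"
  using sigma_add[of 0 0] by simp

lemma delta_zero: "d 0 = 0"
  using delta_add[of 0 0] by simp

abbreviation D :: "'k poly \<Rightarrow> 'k poly" where "D \<equiv> ore_D s d"

lemma coeff_ore_D:
  "coeff (D X) n = (if n = 0 then 0 else s (coeff X (n - 1))) + d (coeff X n)"
  by (cases n) (simp_all add: ore_D_def coeff_map_poly sigma_zero delta_zero)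

lemma ore_D_add: "D (X + Y) = D X + D Y"
  by (rule poly_eqI) (simp add: coeff_ore_D sigma_add delta_add)

lemma ore_D_smult: "D (smult c X) = smult (s c) (D X) + smult (d c) X"
  by (rule poly_eqI) (simp add: coeff_ore_D sigma_mult delta_mult algebra_simps)

lemma ore_D_zero: "D 0 = 0"
  by (rule poly_eqI) (simp add: coeff_ore_D sigma_zero delta_zero)

lemma ore_D_sum: "D (sum f S) = (\<Sum>x\<in>S. D (f x))"
  by (induction S rule: infinite_finite_induct) (simp_all add: ore_D_zero ore_D_add)

lemma funpow_ore_D_add: "(D ^^ j) (X + Y) = (D ^^ j) X + (D ^^ j) Y"
  by (induction j) (simp_all add: ore_D_add)

lemma degree_ore_D_le: "degree X \<le> n \<Longrightarrow> degree (D X) \<le> Suc n"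
  by (rule degree_le) (auto simp: coeff_ore_D coeff_eq_0 sigma_zero delta_zero)

lemma coeff_ore_D_Suc: "degree X \<le> n \<Longrightarrow> coeff (D X) (Suc n) = s (coeff X n)"
  by (simp add: coeff_ore_D coeff_eq_0 delta_zero)

lemma degree_ore_D:
  assumes "s (lead_coeff X) \<noteq> 0"
  shows "degree (D X) = Suc (degree X)"
  using assms coeff_ore_D_Suc[of X "degree X"] degree_ore_D_le[of X "degree X"]
  by (metis le_antisym le_degree order_refl)

lemma ore_mult_bound:
  "degree A \<le> N \<Longrightarrow> ore_mult s d A X = (\<Sum>i\<le>N. smult (coeff A i) ((D ^^ i) X))"
  unfolding ore_mult_def by (rule sum.mono_neutral_left) (auto simp: coeff_eq_0)

lemma ore_mult_zero_left: "ore_mult s d 0 X = 0"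
  by (simp add: ore_mult_def)

lemma ore_mult_one_left: "ore_mult s d 1 X = X"
  by (simp add: ore_mult_def)

lemma ore_mult_add_left: "ore_mult s d (A + B) X = ore_mult s d A X + ore_mult s d B X"
proof -
  let ?N = "max (degree A) (degree B)"
  have "degree (A + B) \<le> ?N" by (rule degree_add_le) auto
  thus ?thesis by (simp add: ore_mult_bound[of _ ?N] sum.distrib[symmetric] smult_add_left)
qed

lemma ore_mult_smult_left: "ore_mult s d (smult c A) X = smult c (ore_mult s d A X)"
proof -
  have "smult c (sum f S) = (\<Sum>i\<in>S. smult c (f i))" for f :: "nat \<Rightarrow> 'k poly" and S
    by (induction S rule: infinite_finite_induct) (simp_all add: smult_add_right)
  thus ?thesis using ore_mult_bound[OF degree_smult_le, of c A X] by (simp add: ore_mult_def)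
qed

lemma ore_mult_add_right: "ore_mult s d A (X + Y) = ore_mult s d A X + ore_mult s d A Y"
  by (simp add: ore_mult_def funpow_ore_D_add smult_add_right sum.distrib)

lemma ore_mult_pCons_zero_left: "ore_mult s d (pCons 0 A) X = ore_mult s d A (D X)"
proof -
  have "ore_mult s d (pCons 0 A) X =
      (\<Sum>i\<le>Suc (degree A). smult (coeff (pCons 0 A) i) ((D ^^ i) X))"
    by (rule ore_mult_bound) (simp add: degree_pCons_le)
  also have "\<dots> = (\<Sum>i\<le>degree A. smult (coeff A i) ((D ^^ Suc i) X))"
    by (subst sum.atMost_Suc_shift) simp
  also have "\<dots> = ore_mult s d A (D X)"
    by (simp add: ore_mult_def funpow_swap1)
  finally show ?thesis .
qed

lemma ore_mult_ore_D_left: "ore_mult s d (D A) X = D (ore_mult s d A X)"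
proof -
  let ?N = "degree A"
  have deg: "degree (map_poly f A) \<le> ?N" for f :: "'k \<Rightarrow> 'k" by (rule map_poly_degree_leq)
  have "ore_mult s d (D A) X = ore_mult s d (map_poly s A) (D X) + ore_mult s d (map_poly d A) X"
    by (simp add: ore_D_def ore_mult_add_left ore_mult_pCons_zero_left)
  also have "\<dots> = (\<Sum>i\<le>?N. smult (s (coeff A i)) (D ((D ^^ i) X)))
      + (\<Sum>i\<le>?N. smult (d (coeff A i)) ((D ^^ i) X))"
    by (simp add: ore_mult_bound[OF deg] coeff_map_poly sigma_zero delta_zero funpow_swap1)
  also have "\<dots> = D (ore_mult s d A X)"
    by (simp add: ore_mult_def ore_D_sum ore_D_smult sum.distrib)
  finally show ?thesis .
qed

end

definition deg_bounded :: "'k::zero poly set \<Rightarrow> nat \<Rightarrow> 'k poly set" where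
  "deg_bounded K k = {P \<in> K. degree P \<le> k}"

definition top_coeffs :: "'k::zero poly set \<Rightarrow> nat \<Rightarrow> 'k set" where
  "top_coeffs K k = (\<lambda>P. coeff P k) ` deg_bounded K k"

locale ore_stable_module = sigma_derivation s d for s d :: "'k::comm_ring_1 \<Rightarrow> 'k" +
  fixes K :: "'k poly set"
  assumes zero_mem: "0 \<in> K"
    and add_mem: "P \<in> K \<Longrightarrow> Q \<in> K \<Longrightarrow> P + Q \<in> K"
    and smult_mem: "P \<in> K \<Longrightarrow> smult c P \<in> K"
    and ore_D_mem: "P \<in> K \<Longrightarrow> D P \<in> K"
    and sigma_surj: "\<exists>b. s b = a"
    and sigma_eq_zero: "s a = 0 \<Longrightarrow> a = 0"
begin

lemma funpow_ore_D_mem: "P \<in> K \<Longrightarrow> (D ^^ i) P \<in> K"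
  by (induction i) (simp_all add: ore_D_mem)

definition deg_bounded_plus_D :: "nat \<Rightarrow> 'k poly set" where
  "deg_bounded_plus_D k = {P + D X | P X. P \<in> deg_bounded K k \<and> X \<in> K}"

lemma deg_bounded_plus_D_zero: "0 \<in> deg_bounded_plus_D k"
  unfolding deg_bounded_plus_D_def deg_bounded_def using zero_mem ore_D_zero by force

lemma deg_bounded_plus_D_add:
  assumes "P \<in> deg_bounded_plus_D k" "Q \<in> deg_bounded_plus_D k"
  shows "P + Q \<in> deg_bounded_plus_D k"
proof -
  from assms obtain P1 X1 P2 X2 where "P1 \<in> deg_bounded K k" "P2 \<in> deg_bounded K k"
    "X1 \<in> K" "X2 \<in> K" "P = P1 + D X1" "Q = P2 + D X2"
    unfolding deg_bounded_plus_D_def by blast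
  moreover have "P1 + D X1 + (P2 + D X2) = (P1 + P2) + D (X1 + X2)"
    by (simp add: ore_D_add algebra_simps)
  ultimately show ?thesis
    unfolding deg_bounded_plus_D_def deg_bounded_def by (blast intro: add_mem degree_add_le)
qed

lemma smult_funpow_ore_D_mem:
  assumes x: "x \<in> deg_bounded K k"
  shows "smult a ((D ^^ i) x) \<in> deg_bounded_plus_D k"
proof (induction i arbitrary: a)
  case 0
  have "smult a x = smult a x + D 0" by (simp add: ore_D_zero)
  moreover have "smult a x \<in> deg_bounded K k"
    using x by (auto simp: deg_bounded_def intro: smult_mem order_trans[OF degree_smult_le])
  ultimately show ?case using zero_mem unfolding deg_bounded_plus_D_def funpow_0 by blast
next
  case (Suc i)
  obtain b where b: "s b = a" using sigma_surj by blast
  let ?Y = "(D ^^ i) x"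
  from Suc.IH[of "- d b"] obtain P X where P: "P \<in> deg_bounded K k" and X: "X \<in> K"
    and PX: "smult (- d b) ?Y = P + D X"
    unfolding deg_bounded_plus_D_def by blast
  have "smult a (D ?Y) = smult (- d b) ?Y + D (smult b ?Y)"
    using ore_D_smult[of b ?Y] b by (simp add: algebra_simps)
  also have "\<dots> = P + D (X + smult b ?Y)"
    by (simp only: PX ore_D_add add.assoc)
  finally have "smult a ((D ^^ Suc i) x) = P + D (X + smult b ?Y)" by simp
  moreover have "X + smult b ?Y \<in> K"
    using X x by (auto simp: deg_bounded_def intro: add_mem smult_mem funpow_ore_D_mem)
  ultimately show ?case using P unfolding deg_bounded_plus_D_def by blast
qed

lemma left_ideal_deg_bounded_subset:
  "ore_left_ideal s d (deg_bounded K k) \<subseteq> deg_bounded_plus_D k"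
proof (rule ore_left_ideal_least[OF deg_bounded_plus_D_zero deg_bounded_plus_D_add])
  fix A x assume "x \<in> deg_bounded K k"
  hence "(\<Sum>i\<le>n. smult (coeff A i) ((D ^^ i) x)) \<in> deg_bounded_plus_D k" for n
    using smult_funpow_ore_D_mem[of x k "coeff A _" "Suc _"] smult_funpow_ore_D_mem[of x k _ 0]
    by (induction n) (simp_all add: deg_bounded_plus_D_add)
  thus "ore_mult s d A x \<in> deg_bounded_plus_D k" by (simp add: ore_mult_def)
qed

lemma left_ideal_coeff_Suc:
  assumes Q: "Q \<in> ore_left_ideal s d (deg_bounded K k)" and deg: "degree Q \<le> Suc k"
  shows "coeff Q (Suc k) \<in> s ` top_coeffs K k"
proof -
  obtain P X where P: "P \<in> deg_bounded K k" and X: "X \<in> K" and QPX: "Q = P + D X"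
    using left_ideal_deg_bounded_subset Q unfolding deg_bounded_plus_D_def by blast
  have degP: "degree P \<le> k" using P by (simp add: deg_bounded_def)
  have degX: "degree X \<le> k"
  proof (cases "X = 0")
    case False
    hence "s (lead_coeff X) \<noteq> 0" using sigma_eq_zero by (metis leading_coeff_0_iff)
    hence "Suc (degree X) = degree (Q - P)" by (simp add: QPX degree_ore_D)
    also have "\<dots> \<le> Suc k" using deg degP degree_diff_le by fastforce
    finally show ?thesis by simp
  qed simp
  have "coeff Q (Suc k) = s (coeff X k)"
    using degP degX by (simp add: QPX coeff_eq_0 coeff_ore_D_Suc)
  thus ?thesis using X degX by (auto simp: top_coeffs_def deg_bounded_def)
qed

lemma sigma_top_coeffs_subset: "s ` top_coeffs K k \<subseteq> top_coeffs K (Suc k)"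
proof
  fix c assume "c \<in> s ` top_coeffs K k"
  then obtain P where P: "P \<in> K" "degree P \<le> k" and c: "c = s (coeff P k)"
    by (auto simp: top_coeffs_def deg_bounded_def)
  have "D P \<in> deg_bounded K (Suc k)"
    using P by (simp add: deg_bounded_def ore_D_mem degree_ore_D_le)
  moreover have "coeff (D P) (Suc k) = c" using P c by (simp add: coeff_ore_D_Suc)
  ultimately show "c \<in> top_coeffs K (Suc k)" unfolding top_coeffs_def by force
qed

lemma deg_bounded_Suc_decomp:
  assumes top: "top_coeffs K (Suc k) \<subseteq> s ` top_coeffs K k"
    and x: "x \<in> deg_bounded K (Suc k)"
  shows "\<exists>P1 P2. P1 \<in> deg_bounded K k \<and> P2 \<in> deg_bounded K k \<and> x = P1 + D P2"
proof -
  have "coeff x (Suc k) \<in> top_coeffs K (Suc k)" using x by (simp add: top_coeffs_def)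
  then obtain P2 where P2: "P2 \<in> deg_bounded K k" and c: "coeff x (Suc k) = s (coeff P2 k)"
    using top by (auto simp: top_coeffs_def)
  have degx: "degree x \<le> Suc k" and degP2: "degree P2 \<le> k"
    using x P2 by (auto simp: deg_bounded_def)
  have "degree (x - D P2) \<le> k"
  proof (rule degree_le, intro allI impI)
    fix n assume "k < n"
    then consider "n = Suc k" | "Suc k < n" by linarith
    thus "coeff (x - D P2) n = 0"
    proof cases
      case 1
      thus ?thesis using c degP2 by (simp add: coeff_ore_D_Suc)
    next
      case 2
      thus ?thesis using degx degree_ore_D_le[OF degP2] by (simp add: coeff_eq_0)
    qed
  qed
  moreover have "x - D P2 \<in> K"
    using x P2 add_mem[of x "smult (-1) (D P2)"] smult_mem[OF ore_D_mem, of P2 "-1"]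
    by (simp add: deg_bounded_def)
  ultimately have "x - D P2 \<in> deg_bounded K k" by (simp add: deg_bounded_def)
  thus ?thesis using P2 by (intro exI[of _ "x - D P2"] exI[of _ P2]) simp
qed

theorem left_ideal_deg_bounded_eq_iff:
  "ore_left_ideal s d (deg_bounded K k) = ore_left_ideal s d (deg_bounded K (Suc k))
    \<longleftrightarrow> s ` top_coeffs K k = top_coeffs K (Suc k)"
proof
  assume eq: "ore_left_ideal s d (deg_bounded K k) = ore_left_ideal s d (deg_bounded K (Suc k))"
  have "top_coeffs K (Suc k) \<subseteq> s ` top_coeffs K k"
  proof
    fix c assume "c \<in> top_coeffs K (Suc k)"
    then obtain Q where Q: "Q \<in> deg_bounded K (Suc k)" and c: "c = coeff Q (Suc k)"
      by (auto simp: top_coeffs_def)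
    have "Q \<in> ore_left_ideal s d (deg_bounded K k)"
      using ore_left_ideal_mult_mem[OF Q, of s d 1] eq by (simp add: ore_mult_one_left)
    thus "c \<in> s ` top_coeffs K k"
      using Q c left_ideal_coeff_Suc by (simp add: deg_bounded_def)
  qed
  with sigma_top_coeffs_subset show "s ` top_coeffs K k = top_coeffs K (Suc k)" by blast
next
  assume eq: "s ` top_coeffs K k = top_coeffs K (Suc k)"
  have "ore_left_ideal s d (deg_bounded K (Suc k)) \<subseteq> ore_left_ideal s d (deg_bounded K k)"
  proof (rule ore_left_ideal_subset)
    fix A x assume "x \<in> deg_bounded K (Suc k)"
    then obtain P1 P2 where "P1 \<in> deg_bounded K k" "P2 \<in> deg_bounded K k" "x = P1 + D P2"
      using deg_bounded_Suc_decomp eq by blast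
    thus "ore_mult s d A x \<in> ore_left_ideal s d (deg_bounded K k)"
      by (simp add: ore_mult_add_right ore_mult_pCons_zero_left[symmetric]
          ore_left_ideal_add_mem ore_left_ideal_mult_mem)
  qed
  moreover have "ore_left_ideal s d (deg_bounded K k) \<subseteq> ore_left_ideal s d (deg_bounded K (Suc k))"
    by (rule ore_left_ideal_mono) (auto simp: deg_bounded_def)
  ultimately show "ore_left_ideal s d (deg_bounded K k) = ore_left_ideal s d (deg_bounded K (Suc k))"
    by blast
qed

end

locale sigma_derivation_idom = sigma_derivation s d for s d :: "'b::idom \<Rightarrow> 'b" +
  assumes sigma_nonzero: "x \<noteq> 0 \<Longrightarrow> s x \<noteq> 0"
begin

lemma sigma_one: "s 1 = 1"
  using sigma_mult[of 1 1] sigma_nonzero[of 1] by simp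

lemma delta_one: "d 1 = 0"
proof -
  have "d 1 + 0 = d 1 + d 1" using delta_mult[of 1 1] by (simp add: sigma_one)
  thus ?thesis by (metis add_left_cancel)
qed

lemma delta_commute: "d b * (s a - a) = d a * (s b - b)"
  using delta_mult[of a b] delta_mult[of b a] by (simp add: algebra_simps)

lemma sig_ext_Fract:
  assumes q: "q \<noteq> 0"
  shows "sig_ext s (Fract p q) = Fract (s p) (s q)"
proof -
  obtain p' q' where rep: "frac_rep (Fract p q) = (p', q')" by fastforce
  with frac_rep_correct[of "Fract p q"] have q': "q' \<noteq> 0" and "Fract p q = Fract p' q'" by auto
  hence "p * q' = p' * q" using q by (simp add: eq_fract)
  hence "s p * s q' = s p' * s q" by (metis sigma_mult)
  thus ?thesis unfolding sig_ext_def rep using q q' sigma_nonzero by (simp add: eq_fract)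
qed

lemma del_ext_Fract:
  assumes q: "q \<noteq> 0"
  shows "del_ext s d (Fract p q) = Fract (d p * s q - s p * d q) (s q * q)"
proof -
  obtain p' q' where rep: "frac_rep (Fract p q) = (p', q')" by fastforce
  with frac_rep_correct[of "Fract p q"] have q': "q' \<noteq> 0" and "Fract p q = Fract p' q'" by auto
  hence G: "p * q' = p' * q" using q by (simp add: eq_fract)
  hence E: "s p * s q' = s p' * s q" by (metis sigma_mult)
  from G have F: "s p * d q' + d p * q' = s p' * d q + d p' * q" by (metis delta_mult)
  have C: "d q' * (s q - q) = d q * (s q' - q')" by (rule delta_commute)
  have "(d p' * s q' - s p' * d q') * (s q * q) = s q' * s q * (d p' * q) - (s p' * s q) * d q' * q"
    by (simp add: algebra_simps)
  also have "\<dots> = s q' * s q * (s p * d q' + d p * q' - s p' * d q) - (s p * s q') * d q' * q"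
    using F E by (simp add: algebra_simps)
  also have "\<dots> = s q' * s q * (s p * d q' + d p * q') - s q' * d q * (s p' * s q) - (s p * s q') * d q' * q"
    by (simp add: algebra_simps)
  also have "\<dots> = s q' * s q * (s p * d q' + d p * q') - s q' * d q * (s p * s q') - (s p * s q') * d q' * q"
    using E by simp
  also have "\<dots> = s p * s q' * (d q' * (s q - q)) + s q' * s q * d p * q' - s q' * d q * (s p * s q')"
    by (simp add: algebra_simps)
  also have "\<dots> = s p * s q' * (d q * (s q' - q')) + s q' * s q * d p * q' - s q' * d q * (s p * s q')"
    using C by simp
  also have "\<dots> = (d p * s q - s p * d q) * (s q' * q')"
    by (simp add: algebra_simps)
  finally show ?thesis
    unfolding del_ext_def rep using q q' sigma_nonzero by (simp add: eq_fract)
qed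

abbreviation se :: "'b fract \<Rightarrow> 'b fract" where "se \<equiv> sig_ext s"
abbreviation de :: "'b fract \<Rightarrow> 'b fract" where "de \<equiv> del_ext s d"

lemma sig_ext_add: "se (x + y) = se x + se y"
  by (cases x; cases y) (simp add: sig_ext_Fract sigma_nonzero sigma_add sigma_mult algebra_simps)

lemma sig_ext_mult: "se (x * y) = se x * se y"
  by (cases x; cases y) (simp add: sig_ext_Fract sigma_mult)

(* The numerator identities below hold only modulo delta_commute, hence each is first proved
   with the defect terms on the right. *)

lemma del_ext_add: "de (x + y) = de x + de y"
proof (cases x; cases y)
  fix a b c e assume x: "x = Fract a b" "b \<noteq> 0" and y: "y = Fract c e" "e \<noteq> 0"
  have "d (a*e + c*b) * s (b*e) - s (a*e + c*b) * d (b*e)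
      - ((d a * s b - s a * d b) * (s e * e) + (d c * s e - s c * d e) * (s b * b))
    = (s c * s b) * (d b * (s e - e) - d e * (s b - b)) + s b * s e * (d c * (s b - b) - d b * (s c - c))"
    by (simp add: delta_add delta_mult sigma_add sigma_mult algebra_simps)
  hence num: "d (a*e + c*b) * s (b*e) - s (a*e + c*b) * d (b*e)
      = (d a * s b - s a * d b) * (s e * e) + (d c * s e - s c * d e) * (s b * b)"
    using delta_commute[of b e] delta_commute[of b c] by simp
  have "de (x + y) = Fract (d (a*e + c*b) * s (b*e) - s (a*e + c*b) * d (b*e)) (s (b*e) * (b*e))"
    using x y by (simp add: del_ext_Fract)
  also have "\<dots> = de x + de y"
    unfolding num using x y sigma_nonzero by (simp add: del_ext_Fract eq_fract sigma_mult algebra_simps)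
  finally show ?thesis .
qed

lemma del_ext_mult: "de (x * y) = se x * de y + de x * y"
proof (cases x; cases y)
  fix a b c e assume x: "x = Fract a b" "b \<noteq> 0" and y: "y = Fract c e" "e \<noteq> 0"
  have "d (a*c) * s (b*e) - s (a*c) * d (b*e)
      - (s a * (d c * s e - s c * d e) * b + (d a * s b - s a * d b) * c * s e)
    = s a * (s e * (d c * (s b - b) - d b * (s c - c)) - s c * (d e * (s b - b) - d b * (s e - e)))"
    by (simp add: delta_mult sigma_mult algebra_simps)
  hence num: "d (a*c) * s (b*e) - s (a*c) * d (b*e)
      = s a * (d c * s e - s c * d e) * b + (d a * s b - s a * d b) * c * s e"
    using delta_commute[of b c] delta_commute[of b e] by simp
  have "de (x * y) = Fract (d (a*c) * s (b*e) - s (a*c) * d (b*e)) (s (b*e) * (b*e))"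
    using x y by (simp add: del_ext_Fract)
  also have "\<dots> = se x * de y + de x * y"
    unfolding num using x y sigma_nonzero
    by (simp add: del_ext_Fract sig_ext_Fract eq_fract sigma_mult algebra_simps)
  finally show ?thesis .
qed

sublocale frac: sigma_derivation se de
  by unfold_locales (simp_all add: sig_ext_add sig_ext_mult del_ext_add del_ext_mult)

lemma coeff_ore_embed: "coeff (ore_embed P) n = Fract (coeff P n) 1"
  by (simp add: ore_embed_def coeff_map_poly Zero_fract_def)

lemma ore_embed_add: "ore_embed (P + Q) = ore_embed P + ore_embed Q"
  by (rule poly_eqI) (simp add: coeff_ore_embed)

lemma ore_embed_smult: "ore_embed (smult c P) = smult (Fract c 1) (ore_embed P)"
  by (rule poly_eqI) (simp add: coeff_ore_embed)

lemma ore_embed_ore_D: "ore_embed (D P) = frac.D (ore_embed P)"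
  by (rule poly_eqI)
    (simp add: coeff_ore_embed coeff_ore_D frac.coeff_ore_D
      sig_ext_Fract del_ext_Fract sigma_one delta_one)

definition ore_content :: "'b poly \<Rightarrow> 'b poly set" where
  "ore_content L = {P. \<exists>A. ore_embed P = ore_mult se de A (ore_embed L)}"

lemma ore_content_zero: "0 \<in> ore_content L"
  unfolding ore_content_def
  by (intro CollectI exI[of _ 0]) (simp add: ore_embed_def frac.ore_mult_zero_left)

lemma ore_content_add: "P \<in> ore_content L \<Longrightarrow> Q \<in> ore_content L \<Longrightarrow> P + Q \<in> ore_content L"
  unfolding ore_content_def by (auto simp: ore_embed_add frac.ore_mult_add_left[symmetric])

lemma ore_content_smult: "P \<in> ore_content L \<Longrightarrow> smult c P \<in> ore_content L"
  unfolding ore_content_def by (auto simp: ore_embed_smult frac.ore_mult_smult_left[symmetric])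

lemma ore_content_ore_D: "P \<in> ore_content L \<Longrightarrow> D P \<in> ore_content L"
  unfolding ore_content_def by (auto simp: ore_embed_ore_D frac.ore_mult_ore_D_left[symmetric])

end

lemma sig_add: "sig \<gamma> \<tau> (p + q) = sig \<gamma> \<tau> p + sig \<gamma> \<tau> q"
  by (simp add: sig_def pcompose_add)

lemma sig_mult: "sig \<gamma> \<tau> (p * q) = sig \<gamma> \<tau> p * sig \<gamma> \<tau> q"
  by (simp add: sig_def pcompose_mult)

lemma sig_eq_0_iff: "\<gamma> \<noteq> 0 \<Longrightarrow> sig \<gamma> \<tau> p = 0 \<longleftrightarrow> p = 0"
  by (simp add: sig_def pcompose_eq_0_iff)

lemma sig_surj:
  assumes "\<gamma> dvd 1"
  shows "\<exists>q. sig \<gamma> \<tau> q = p"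
proof -
  obtain g where g: "1 = \<gamma> * g" using assms by (auto simp: dvd_def)
  have "pcompose [:- (g * \<tau>), g:] [:\<tau>, \<gamma>:] = [:0, 1:]"
    using g by (simp add: pcompose_pCons algebra_simps)
  hence "sig \<gamma> \<tau> (pcompose p [:- (g * \<tau>), g:]) = p"
    by (simp add: sig_def pcompose_assoc[symmetric])
  thus ?thesis by blast
qed

theorem mainTheorem13:
  fixes \<gamma> \<tau> :: "'a::idom" and \<delta> :: "'a poly \<Rightarrow> 'a poly"
    and L :: "'a poly poly" and r k :: nat
  assumes pid: "is_pid TYPE('a)"
    and unit: "\<gamma> dvd 1"
    and d_add: "\<And>p q. \<delta> (p + q) = \<delta> p + \<delta> q"
    and d_lin: "\<And>c p. \<delta> (smult c p) = smult c (\<delta> p)"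
    and d_der: "\<And>p q. \<delta> (p * q) = sig \<gamma> \<tau> p * \<delta> q + \<delta> p * q"
    and d_deg: "degree (\<delta> [:0, 1:]) \<le> 1"
    and ord: "degree L = r" and rpos: "r > 0"
    and kr: "k \<ge> r"
  shows "ore_left_ideal (sig \<gamma> \<tau>) \<delta> (Mk \<gamma> \<tau> \<delta> L k)
           = ore_left_ideal (sig \<gamma> \<tau>) \<delta> (Mk \<gamma> \<tau> \<delta> L (Suc k))
         \<longleftrightarrow> sig \<gamma> \<tau> ` Ik \<gamma> \<tau> \<delta> L k = Ik \<gamma> \<tau> \<delta> L (Suc k)"
proof -
  \<comment> \<open>The equivalence holds for every k.\<close>
  have \<gamma>: "\<gamma> \<noteq> 0" using unit by auto
  interpret sigma_derivation_idom "sig \<gamma> \<tau>" \<delta>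
    by unfold_locales (simp_all add: sig_add sig_mult sig_eq_0_iff[OF \<gamma>] d_add d_der)
  have cont: "cont \<gamma> \<tau> \<delta> L = ore_content L"
    by (simp add: cont_def ore_content_def)
  interpret ore_stable_module "sig \<gamma> \<tau>" \<delta> "cont \<gamma> \<tau> \<delta> L"
    unfolding cont
    by unfold_locales (simp_all add: ore_content_zero ore_content_add ore_content_smult ore_content_ore_D
        sig_surj[OF unit] sig_eq_0_iff[OF \<gamma>])
  have Mk: "Mk \<gamma> \<tau> \<delta> L n = deg_bounded (cont \<gamma> \<tau> \<delta> L) n" for n
    by (simp add: Mk_def deg_bounded_def)
  have Ik: "Ik \<gamma> \<tau> \<delta> L n = top_coeffs (cont \<gamma> \<tau> \<delta> L) n" for n
    using zero_mem by (force simp: Ik_def Mk top_coeffs_def deg_bounded_def)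
  show ?thesis
    unfolding Mk Ik by (rule left_ideal_deg_bounded_eq_iff)
qed

end
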